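(* Consider an $L$-layer ADMM-CSNet with initial weights $(W_{10}^l)_{i,j}\sim\mathcal N(0,1)$, $(W_{20}^l)_{i,j}\sim\mathcal N(0,1)$ i.i.d., $l\in[L]$, and suppose $\|W_{20}^l\|\le c_{20}\sqrt m$ for all $l$ with $c_{20}=3$. Then for any $\mathbf W_1,\mathbf W_2$ with $\|\mathbf W_1-\mathbf W_{10}\|\le R_1$, $\|\mathbf W_2-\mathbf W_{20}\|\le R_2$ and any $s\in[m]$, $$\|\mathbf b_s^l\|\le L_\sigma^{L-l}\big(2(c_{20}+R_2/\sqrt m)+1\big)^{L-l},\quad l\in[L],$$ and at initialization ($R_2=0$), $\|\mathbf b^l_{s,0}\|\le L_\sigma^{L-l}(2c_{20}+1)^{L-l}$.
   Context: Fix $\lambda>0$ and $\sigma(x)=\log(1+e^{x-\lambda})-\log(1+e^{-x-\lambda})$ (componentwise), $|\sigma'|\le L_\sigma$. ADMM-CSNet: input $\mathbf y\in\mathbb R^n$, initial $\mathbf z^0,\mathbf u^0\in\mathbb R^m$; $\mathbf x^l=\frac1{\sqrt n}W_1^l\mathbf y+\frac1{\sqrt m}W_2^l(\mathbf z^{l-1}-\mathbf u^{l-1})$, $\mathbf z^l=\sigma(\mathbf x^l+\mathbf u^{l-1})$, $\mathbf u^l=\mathbf u^{l-1}+\mathbf x^l-\mathbf z^l$, output $\mathbf f=\frac1{\sqrt m}\mathbf z^L$, $f_s$ its $s$-th entry. $\mathbf b_s^l=\partial f_s/\partial\mathbf z^l$ (total derivative through the recursion), $\mathbf b^l_{s,0}$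 the same at the initial weights. $\mathbf W_1=(W_1^l)_l$, $\mathbf W_2=(W_2^l)_l$; weight distances are Frobenius norms over all entries. $\|\cdot\|$ is the Euclidean norm for vectors, spectral norm for matrices. *)

theory Defs
  imports "HOL-Analysis.Analysis"
begin

definition sigma :: "real \<Rightarrow> real \<Rightarrow> real" where
  "sigma lam x = ln (1 + exp (x - lam)) - ln (1 + exp (- x - lam))"

definition sigma_vec :: "real \<Rightarrow> real^'m \<Rightarrow> real^'m" where
  "sigma_vec lam v = (\<chi> i. sigma lam (v $ i))"

definition c20 :: real where "c20 = 3"

definition layer ::
  "(nat \<Rightarrow> real^'n^'m) \<Rightarrow> (nat \<Rightarrow> real^'m^'m) \<Rightarrow> real \<Rightarrow> real^'n \<Rightarrow> nat
     \<Rightarrow> (real^'m) \<times> (real^'m) \<Rightarrow> (real^'m) \<times> (real^'m)" where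
  "layer W1 W2 lam y j st =
     (let z = fst st; u = snd st;
          x = (1 / sqrt (real CARD('n))) *\<^sub>R (W1 j *v y)
            + (1 / sqrt (real CARD('m))) *\<^sub>R (W2 j *v (z - u));
          z' = sigma_vec lam (x + u)
      in (z', u + x - z'))"

fun layers ::
  "(nat \<Rightarrow> real^'n^'m) \<Rightarrow> (nat \<Rightarrow> real^'m^'m) \<Rightarrow> real \<Rightarrow> real^'n \<Rightarrow> nat \<Rightarrow> nat
     \<Rightarrow> (real^'m) \<times> (real^'m) \<Rightarrow> (real^'m) \<times> (real^'m)" where
  "layers W1 W2 lam y a 0 st = st"
| "layers W1 W2 lam y a (Suc k) st = layer W1 W2 lam y (a + Suc k) (layers W1 W2 lam y a k st)"

definition state ::
  "(nat \<Rightarrow> real^'n^'m) \<Rightarrow> (nat \<Rightarrow> real^'m^'m) \<Rightarrow> real \<Rightarrow> real^'n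
     \<Rightarrow> real^'m \<Rightarrow> real^'m \<Rightarrow> nat \<Rightarrow> (real^'m) \<times> (real^'m)" where
  "state W1 W2 lam y z0 u0 l = layers W1 W2 lam y 0 l (z0, u0)"

text \<open>The output entry f_s viewed as a function of the node z^l (total derivative through the
  recursion): x^l and u^(l-1) are held at their forward values, u^l = u^(l-1) + x^l - zeta
  (note u^(l-1) + x^l = z^l + u^l), and layers l+1..L are recomputed; f = z^L / sqrt m.\<close>
definition out_of_z ::
  "(nat \<Rightarrow> real^'n^'m) \<Rightarrow> (nat \<Rightarrow> real^'m^'m) \<Rightarrow> real \<Rightarrow> real^'n
     \<Rightarrow> real^'m \<Rightarrow> real^'m \<Rightarrow> nat \<Rightarrow> nat \<Rightarrow> 'm \<Rightarrow> real^'m \<Rightarrow> real" where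
  "out_of_z W1 W2 lam y z0 u0 L l s zeta =
     (let st = state W1 W2 lam y z0 u0 l;
          fin = layers W1 W2 lam y l (L - l) (zeta, fst st + snd st - zeta)
      in fst fin $ s / sqrt (real CARD('m)))"

definition spec_norm :: "real^'a^'b \<Rightarrow> real" where
  "spec_norm A = onorm (\<lambda>v. A *v v)"

definition frob_dist :: "nat \<Rightarrow> (nat \<Rightarrow> real^'a^'b) \<Rightarrow> (nat \<Rightarrow> real^'a^'b) \<Rightarrow> real" where
  "frob_dist L W V = sqrt (\<Sum>l\<in>{1..L}. \<Sum>i\<in>UNIV. \<Sum>j\<in>UNIV. (W l $ i $ j - V l $ i $ j)\<^sup>2)"

end

theory Submission
  imports Defs
begin

text \<open>
  Write w = z + u for the pre-activation x^l + u^(l-1) = z^l + u^l. A layer sends (z, u) to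
  (\<sigma> w', w' - \<sigma> w') with w' = u + c + W2 (z - u) / sqrt m, where c collects the W1 y term. Since 0 < \<sigma>' < 1, both w \<mapsto> w - \<sigma> w and
  w \<mapsto> 2 \<sigma> w - w are 1-Lipschitz, hence when ||W2|| \<le> C sqrt m the next pre-activation is a
  (1 + C)-Lipschitz function of the current one. Perturbing z^l with z^l + u^l held fixed costs a
  factor 1 + 2 C in the first step. So f_s is (1 + 2 C)^(L-l)-Lipschitz in z^l, which bounds its
  gradient. The factor L_\<sigma>^(L-l) is harmless because \<sigma>' comes arbitrarily close to 1, forcing
  L_\<sigma> \<ge> 1. Finally ||W2|| \<le> c20 sqrt m + R2, as the spectral norm is at most the Frobenius norm.
\<close>

lemma abs_derivative_le_lipschitz:
  fixes f :: "'a::real_normed_vector \<Rightarrow> real"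
  assumes f': "(f has_derivative f') (at x)" and K: "K-lipschitz_on UNIV f"
  shows "\<bar>f' h\<bar> \<le> K * norm h"
proof -
  define g where "g t = f (x + t *\<^sub>R h)" for t
  have line: "((\<lambda>t. x + t *\<^sub>R h) has_derivative (\<lambda>t. t *\<^sub>R h)) (at 0)"
    by (intro derivative_eq_intros) auto
  have "(f has_derivative f') (at (x + 0 *\<^sub>R h))"
    using f' by simp
  from has_derivative_compose[OF line this]
  have "(g has_derivative (\<lambda>t. f' (t *\<^sub>R h))) (at 0)"
    unfolding g_def .
  moreover have "(\<lambda>t. f' (t *\<^sub>R h)) = (*) (f' h)"
    using linear_cmul[OF has_derivative_linear[OF f']] by (simp add: fun_eq_iff)
  ultimately have "(g has_real_derivative f' h) (at 0)"
    by (simp add: has_field_derivative_def)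
  then have "((\<lambda>t. (g t - g 0) / (t - 0)) \<longlongrightarrow> f' h) (at 0)"
    by (simp only: has_field_derivative_iff)
  moreover have "norm ((g t - g 0) / (t - 0)) \<le> K * norm h" for t
  proof -
    have "\<bar>g t - g 0\<bar> \<le> K * (\<bar>t\<bar> * norm h)"
      using lipschitz_onD[OF K, of "x + t *\<^sub>R h" x] by (simp add: g_def dist_real_def dist_norm)
    then show ?thesis
      using lipschitz_on_nonneg[OF K] by (cases "t = 0") (auto simp: abs_divide field_simps)
  qed
  ultimately show ?thesis
    using Lim_norm_ubound[OF trivial_limit_at] by fastforce
qed

lemma norm_gradient_le_lipschitz:
  fixes f :: "'a::real_inner \<Rightarrow> real"
  assumes "(f has_derivative (\<lambda>h. b \<bullet> h)) (at x)" and "K-lipschitz_on UNIV f"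
  shows "norm b \<le> K"
proof -
  have "norm b * norm b \<le> K * norm b"
    using abs_derivative_le_lipschitz[OF assms, of b]
    by (simp add: power2_eq_square flip: power2_norm_eq_inner)
  then show ?thesis
    using lipschitz_on_nonneg[OF assms(2)] by (cases "b = 0") auto
qed

definition sigma_deriv :: "real \<Rightarrow> real \<Rightarrow> real" where
  "sigma_deriv lam x = 1 / (1 + exp (lam - x)) + 1 / (1 + exp (lam + x))"

lemma has_real_derivative_sigma: "(sigma lam has_real_derivative sigma_deriv lam x) (at x)"
proof -
  have logistic: "exp t / (1 + exp t) = 1 / (1 + exp (- t))" for t :: real
    by (simp add: exp_minus field_simps add_pos_pos)
  show ?thesis
    unfolding sigma_def sigma_deriv_def
    by (rule derivative_eq_intros refl | simp add: add_pos_pos)+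
       (simp add: logistic[of "x - lam", simplified] logistic[of "- x - lam", simplified] add_ac)
qed

lemma deriv_sigma: "deriv (sigma lam) x = sigma_deriv lam x"
  using has_real_derivative_sigma by (rule DERIV_imp_deriv)

lemma sigma_deriv_pos: "0 < sigma_deriv lam x"
  unfolding sigma_deriv_def by (simp add: add_pos_pos)

lemma sigma_deriv_less_1:
  assumes "lam > 0"
  shows "sigma_deriv lam x < 1"
proof -
  define a b where "a = exp (lam - x)" and "b = exp (lam + x)"
  have "a > 0" "b > 0" unfolding a_def b_def by simp_all
  have "1 < a * b"
    using assms by (simp add: a_def b_def flip: exp_add)
  then have "2 + a + b < (1 + a) * (1 + b)"
    by (simp add: algebra_simps)
  with \<open>a > 0\<close> \<open>b > 0\<close> show ?thesis
    unfolding sigma_deriv_def a_def[symmetric] b_def[symmetric]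
    by (simp add: field_simps)
qed

lemma ex_sigma_deriv_gt:
  assumes "c < 1"
  shows "\<exists>x. c < sigma_deriv lam x"
proof (cases "c \<le> 0")
  case True
  then show ?thesis using sigma_deriv_pos by (meson le_less_trans)
next
  case False
  define x where "x = lam - ln ((1 - c) / c)"
  have "1 / (1 + exp (lam - x)) = c"
    using False assms by (simp add: x_def field_simps)
  then have "c < sigma_deriv lam x"
    unfolding sigma_deriv_def by (simp add: add_pos_pos)
  then show ?thesis ..
qed

lemma one_le_if_abs_deriv_sigma_le:
  assumes "\<And>x. \<bar>deriv (sigma lam) x\<bar> \<le> Lsig"
  shows "1 \<le> Lsig"
proof (rule ccontr)
  assume "\<not> 1 \<le> Lsig"
  then obtain x where "Lsig < sigma_deriv lam x"
    using ex_sigma_deriv_gt by (meson not_le)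
  with assms[of x] show False by (simp add: deriv_sigma)
qed

lemma lipschitz_on_UNIV_if_abs_deriv_le:
  fixes f :: "real \<Rightarrow> real"
  assumes "\<And>x. (f has_real_derivative f' x) (at x)" and "\<And>x. \<bar>f' x\<bar> \<le> C"
  shows "C-lipschitz_on UNIV f"
proof (rule bounded_derivative_imp_lipschitz)
  show "(f has_derivative (\<lambda>h. f' x * h)) (at x within UNIV)" for x
    using assms(1) by (simp add: has_field_derivative_def)
  show "onorm (\<lambda>h. f' x * h) \<le> C" for x
    using onorm_scaleR[of "\<lambda>h::real. h" "f' x"] assms(2)[of x] by (simp add: onorm_id)
  show "0 \<le> C" using assms(2) abs_ge_zero order_trans by blast
qed simp

lemma sigma_lipschitz:
  assumes "lam > 0"
  shows "1-lipschitz_on UNIV (sigma lam)"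
    and "1-lipschitz_on UNIV (\<lambda>t. t - sigma lam t)"
    and "1-lipschitz_on UNIV (\<lambda>t. 2 * sigma lam t - t)"
  using sigma_deriv_pos[of lam] sigma_deriv_less_1[OF assms]
  by (auto intro!: lipschitz_on_UNIV_if_abs_deriv_le derivative_eq_intros has_real_derivative_sigma
      simp: abs_le_iff less_imp_le)

lemma lipschitz_on_vec_lambda:
  fixes f :: "real \<Rightarrow> real"
  assumes "C-lipschitz_on UNIV f"
  shows "C-lipschitz_on UNIV (\<lambda>v::real^'n. \<chi> i. f (v $ i))"
proof (rule lipschitz_onI)
  show "0 \<le> C" using assms by (rule lipschitz_on_nonneg)
  fix v w :: "real^'n"
  have "norm ((\<chi> i. f (v $ i)) - (\<chi> i. f (w $ i))) \<le> norm (C *\<^sub>R (v - w))"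
  proof (rule norm_le_componentwise_cart)
    fix i
    show "norm (((\<chi> i. f (v $ i)) - (\<chi> i. f (w $ i))) $ i) \<le> norm ((C *\<^sub>R (v - w)) $ i)"
      using lipschitz_onD[OF assms, of "v $ i" "w $ i"] \<open>0 \<le> C\<close> by (simp add: dist_real_def)
  qed
  then show "dist (\<chi> i. f (v $ i)) (\<chi> i. f (w $ i)) \<le> C * dist v w"
    using \<open>0 \<le> C\<close> by (simp add: dist_norm)
qed

lemma sigma_vec_lipschitz:
  assumes "lam > 0"
  shows "1-lipschitz_on UNIV (sigma_vec lam :: real^'n \<Rightarrow> real^'n)"
    and "1-lipschitz_on UNIV (\<lambda>w::real^'n. w - sigma_vec lam w)"
    and "1-lipschitz_on UNIV (\<lambda>w::real^'n. 2 *\<^sub>R sigma_vec lam w - w)"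
proof -
  have "sigma_vec lam = (\<lambda>w::real^'n. \<chi> i. sigma lam (w $ i))"
    and "(\<lambda>w::real^'n. w - sigma_vec lam w) = (\<lambda>w. \<chi> i. w $ i - sigma lam (w $ i))"
    and "(\<lambda>w::real^'n. 2 *\<^sub>R sigma_vec lam w - w) = (\<lambda>w. \<chi> i. 2 * sigma lam (w $ i) - w $ i)"
    by (simp_all add: fun_eq_iff sigma_vec_def vec_eq_iff)
  with sigma_lipschitz[OF assms, THEN lipschitz_on_vec_lambda, where 'n='n]
  show "1-lipschitz_on UNIV (sigma_vec lam :: real^'n \<Rightarrow> real^'n)"
    and "1-lipschitz_on UNIV (\<lambda>w::real^'n. w - sigma_vec lam w)"
    and "1-lipschitz_on UNIV (\<lambda>w::real^'n. 2 *\<^sub>R sigma_vec lam w - w)"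
    by metis+
qed

lemma sigma_vec_differentiable:
  fixes v :: "real^'n"
  shows "sigma_vec lam differentiable (at v)"
proof -
  have "sigma_vec lam = (\<lambda>v::real^'n. \<Sum>i\<in>UNIV. sigma lam (v $ i) *\<^sub>R axis i 1)"
    by (simp add: fun_eq_iff sigma_vec_def vec_eq_iff axis_def if_distrib cong: if_cong)
  moreover have "(\<lambda>v. sigma lam (v $ i)) differentiable (at v)" for i
  proof (rule differentiable_compose[where f="sigma lam"])
    show "sigma lam differentiable (at (v $ i))"
      using has_real_derivative_sigma real_differentiable_def differentiableI by blast
  qed (simp add: bounded_linear_imp_differentiable bounded_linear_vec_nth)
  ultimately show ?thesis
    by (simp add: differentiable_sum differentiable_scaleR)
qed

lemma norm_matrix_vector_mult_le_spec_norm: "norm (A *v v) \<le> spec_norm A * norm v"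
  unfolding spec_norm_def by (rule onorm[OF matrix_vector_mul_bounded_linear])

lemma spec_norm_add_le: "spec_norm (A + B) \<le> spec_norm A + spec_norm B"
  unfolding spec_norm_def matrix_vector_mult_add_rdistrib
  by (rule onorm_triangle) (rule matrix_vector_mul_bounded_linear)+

lemma spec_norm_le_frobenius:
  fixes A :: "real^'a^'b"
  shows "spec_norm A \<le> sqrt (\<Sum>i\<in>UNIV. \<Sum>j\<in>UNIV. (A $ i $ j)\<^sup>2)"
  unfolding spec_norm_def
proof (rule onorm_le)
  fix v :: "real^'a"
  have "((A *v v) $ i)\<^sup>2 \<le> (\<Sum>j\<in>UNIV. (A $ i $ j)\<^sup>2) * (\<Sum>j\<in>UNIV. (v $ j)\<^sup>2)" for i
    unfolding matrix_vector_mult_def using Cauchy_Schwarz_ineq_sum by simp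
  then have "(\<Sum>i\<in>UNIV. ((A *v v) $ i)\<^sup>2)
      \<le> (\<Sum>i\<in>UNIV. \<Sum>j\<in>UNIV. (A $ i $ j)\<^sup>2) * (\<Sum>j\<in>UNIV. (v $ j)\<^sup>2)"
    by (simp add: sum_distrib_right sum_mono)
  then show "norm (A *v v) \<le> sqrt (\<Sum>i\<in>UNIV. \<Sum>j\<in>UNIV. (A $ i $ j)\<^sup>2) * norm v"
    by (simp add: norm_vec_def L2_set_def real_sqrt_le_mono flip: real_sqrt_mult)
qed

lemma spec_norm_diff_le_frob_dist:
  assumes "j \<in> {1..L}"
  shows "spec_norm (W j - V j) \<le> frob_dist L W V"
proof -
  have "spec_norm (W j - V j) \<le> sqrt (\<Sum>i\<in>UNIV. \<Sum>k\<in>UNIV. (W j $ i $ k - V j $ i $ k)\<^sup>2)"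
    using spec_norm_le_frobenius[of "W j - V j"] by simp
  also have "\<dots> \<le> frob_dist L W V"
    unfolding frob_dist_def
    by (intro real_sqrt_le_mono member_le_sum[OF assms]) (auto intro!: sum_nonneg)
  finally show ?thesis .
qed

definition pre_act :: "'a::plus \<times> 'a \<Rightarrow> 'a" where
  "pre_act st = fst st + snd st"

definition post_act :: "real \<Rightarrow> real^'m \<Rightarrow> (real^'m) \<times> (real^'m)" where
  "post_act lam w = (sigma_vec lam w, w - sigma_vec lam w)"

lemma layer_eq_post_act: "layer W1 W2 lam y j st = post_act lam (pre_act (layer W1 W2 lam y j st))"
  by (simp add: layer_def post_act_def pre_act_def Let_def add_ac)

lemma pre_act_layer:
  fixes W1 :: "nat \<Rightarrow> real^'n::finite^'m::finite"
  shows "pre_act (layer W1 W2 lam y j st) = snd st + (1 / sqrt (real CARD('n))) *\<^sub>R (W1 j *v y)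
     + (1 / sqrt (real CARD('m))) *\<^sub>R (W2 j *v (fst st - snd st))"
  by (simp add: layer_def pre_act_def Let_def algebra_simps)

lemma layers_Suc_eq_post_act:
  "layers W1 W2 lam y a (Suc k) st = post_act lam (pre_act (layers W1 W2 lam y a (Suc k) st))"
  by (simp only: layers.simps) (rule layer_eq_post_act)

lemma dist_pre_act_layer_le:
  fixes W1 :: "nat \<Rightarrow> real^'n::finite^'m::finite"
  assumes "spec_norm (W2 j) \<le> C * sqrt (real CARD('m))"
  shows "dist (pre_act (layer W1 W2 lam y j st1)) (pre_act (layer W1 W2 lam y j st2))
    \<le> dist (snd st1) (snd st2) + C * dist (fst st1 - snd st1) (fst st2 - snd st2)"
proof -
  define d where "d = (fst st1 - snd st1) - (fst st2 - snd st2)"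
  have "pre_act (layer W1 W2 lam y j st1) - pre_act (layer W1 W2 lam y j st2)
      = (snd st1 - snd st2) + (1 / sqrt (real CARD('m))) *\<^sub>R (W2 j *v d)"
    by (simp add: pre_act_layer d_def matrix_vector_mult_diff_distrib algebra_simps)
  moreover have "norm ((1 / sqrt (real CARD('m))) *\<^sub>R (W2 j *v d)) \<le> C * norm d"
  proof -
    have "norm (W2 j *v d) \<le> C * sqrt (real CARD('m)) * norm d"
      using norm_matrix_vector_mult_le_spec_norm[of "W2 j" d] assms
      by (meson mult_right_mono norm_ge_zero order_trans)
    then show ?thesis
      by (simp add: field_simps)
  qed
  ultimately show ?thesis
    by (auto simp: dist_norm d_def intro!: norm_triangle_le)
qed

lemma lipschitz_pre_act_layer_post_act:
  fixes W1 :: "nat \<Rightarrow> real^'n::finite^'m::finite"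
  assumes lam: "lam > 0" and "C \<ge> 0" and W2: "spec_norm (W2 j) \<le> C * sqrt (real CARD('m))"
  shows "(1 + C)-lipschitz_on UNIV (\<lambda>w. pre_act (layer W1 W2 lam y j (post_act lam w)))"
proof (rule lipschitz_onI)
  fix w1 w2 :: "real^'m"
  have "dist (pre_act (layer W1 W2 lam y j (post_act lam w1)))
        (pre_act (layer W1 W2 lam y j (post_act lam w2)))
      \<le> dist (w1 - sigma_vec lam w1) (w2 - sigma_vec lam w2)
        + C * dist (2 *\<^sub>R sigma_vec lam w1 - w1) (2 *\<^sub>R sigma_vec lam w2 - w2)"
  proof -
    have "fst (post_act lam w) - snd (post_act lam w) = 2 *\<^sub>R sigma_vec lam w - w" for w :: "real^'m"
      by (simp add: post_act_def scaleR_2)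
    then show ?thesis
      using dist_pre_act_layer_le[where ?W2.0=W2 and j=j and C=C, OF W2,
          of W1 lam y "post_act lam w1" "post_act lam w2"]
      by (simp add: post_act_def)
  qed
  also have "\<dots> \<le> dist w1 w2 + C * dist w1 w2"
    using lipschitz_onD[OF sigma_vec_lipschitz(2)[OF lam]]
      lipschitz_onD[OF sigma_vec_lipschitz(3)[OF lam]]
    by (intro add_mono mult_left_mono \<open>C \<ge> 0\<close>) auto
  finally show "dist (pre_act (layer W1 W2 lam y j (post_act lam w1)))
      (pre_act (layer W1 W2 lam y j (post_act lam w2))) \<le> (1 + C) * dist w1 w2"
    by (simp add: algebra_simps)
qed (use \<open>C \<ge> 0\<close> in simp)

lemma lipschitz_pre_act_layer_fixed_sum:
  fixes W1 :: "nat \<Rightarrow> real^'n::finite^'m::finite"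
  assumes "C \<ge> 0" and W2: "spec_norm (W2 j) \<le> C * sqrt (real CARD('m))"
  shows "(1 + 2 * C)-lipschitz_on UNIV (\<lambda>\<zeta>. pre_act (layer W1 W2 lam y j (\<zeta>, p - \<zeta>)))"
proof (rule lipschitz_onI)
  fix \<zeta>1 \<zeta>2 :: "real^'m"
  have "dist (\<zeta>1 - (p - \<zeta>1)) (\<zeta>2 - (p - \<zeta>2)) = 2 * dist \<zeta>1 \<zeta>2"
    using norm_scaleR[of 2 "\<zeta>1 - \<zeta>2"] by (simp add: dist_norm scaleR_2 algebra_simps)
  moreover have "dist (p - \<zeta>1) (p - \<zeta>2) = dist \<zeta>1 \<zeta>2"
    by (simp add: dist_norm norm_minus_commute)
  ultimately show "dist (pre_act (layer W1 W2 lam y j (\<zeta>1, p - \<zeta>1)))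
      (pre_act (layer W1 W2 lam y j (\<zeta>2, p - \<zeta>2))) \<le> (1 + 2 * C) * dist \<zeta>1 \<zeta>2"
    using dist_pre_act_layer_le[where ?W2.0=W2 and j=j and C=C, OF W2,
        of W1 lam y "(\<zeta>1, p - \<zeta>1)" "(\<zeta>2, p - \<zeta>2)"]
    by (simp add: algebra_simps)
qed (use \<open>C \<ge> 0\<close> in simp)

lemma lipschitz_pre_act_layers:
  fixes W1 :: "nat \<Rightarrow> real^'n::finite^'m::finite"
  assumes lam: "lam > 0" and C: "C \<ge> 0"
    and W2: "\<And>j. j \<in> {l<..l + Suc k} \<Longrightarrow> spec_norm (W2 j) \<le> C * sqrt (real CARD('m))"
  shows "((1 + 2 * C) ^ Suc k)-lipschitz_on UNIV
           (\<lambda>\<zeta>. pre_act (layers W1 W2 lam y l (Suc k) (\<zeta>, p - \<zeta>)))"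
  using W2
proof (induction k)
  case 0
  then show ?case
    using lipschitz_pre_act_layer_fixed_sum[OF C, of W2 "Suc l"] by simp
next
  case (Suc k)
  define j where "j = l + Suc (Suc k)"
  have IH: "((1 + 2 * C) ^ Suc k)-lipschitz_on UNIV
      (\<lambda>\<zeta>. pre_act (layers W1 W2 lam y l (Suc k) (\<zeta>, p - \<zeta>)))"
    using Suc by simp
  have step: "(1 + C)-lipschitz_on UNIV (\<lambda>w. pre_act (layer W1 W2 lam y j (post_act lam w)))"
    by (rule lipschitz_pre_act_layer_post_act[OF lam C]) (use Suc.prems in \<open>simp add: j_def\<close>)
  have "((1 + C) * (1 + 2 * C) ^ Suc k)-lipschitz_on UNIV
      (\<lambda>\<zeta>. pre_act (layers W1 W2 lam y l (Suc (Suc k)) (\<zeta>, p - \<zeta>)))"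
    using lipschitz_on_compose2[OF IH lipschitz_on_subset[OF step subset_UNIV]]
    by (subst layers.simps, subst layers_Suc_eq_post_act) (simp add: j_def)
  then show ?case
    by (rule lipschitz_on_mono) (use C in auto)
qed

lemma lipschitz_fst_layers:
  fixes W1 :: "nat \<Rightarrow> real^'n::finite^'m::finite"
  assumes lam: "lam > 0" and C: "C \<ge> 0"
    and W2: "\<And>j. j \<in> {l<..l + k} \<Longrightarrow> spec_norm (W2 j) \<le> C * sqrt (real CARD('m))"
  shows "((1 + 2 * C) ^ k)-lipschitz_on UNIV (\<lambda>\<zeta>. fst (layers W1 W2 lam y l k (\<zeta>, p - \<zeta>)))"
proof (cases k)
  case 0
  then show ?thesis by (simp add: lipschitz_on_id)
next
  case (Suc k')
  have "((1 + 2 * C) ^ k)-lipschitz_on UNIV (\<lambda>\<zeta>. pre_act (layers W1 W2 lam y l k (\<zeta>, p - \<zeta>)))"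
    unfolding Suc by (rule lipschitz_pre_act_layers[OF lam C]) (use W2 Suc in simp)
  then have "(1 * (1 + 2 * C) ^ k)-lipschitz_on UNIV
      (\<lambda>\<zeta>. sigma_vec lam (pre_act (layers W1 W2 lam y l k (\<zeta>, p - \<zeta>))))"
    by (intro lipschitz_on_compose2 lipschitz_on_subset[OF sigma_vec_lipschitz(1)[OF lam]]) auto
  moreover have "fst (layers W1 W2 lam y l k st) = sigma_vec lam (pre_act (layers W1 W2 lam y l k st))"
    for st
    unfolding Suc using layers_Suc_eq_post_act[of W1 W2 lam y l k' st]
    by (metis fst_conv post_act_def)
  ultimately show ?thesis
    by simp
qed

lemma out_of_z_eq:
  fixes W1 :: "nat \<Rightarrow> real^'n::finite^'m::finite"
  shows "out_of_z W1 W2 lam y z0 u0 L l s = (\<lambda>\<zeta>.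
    fst (layers W1 W2 lam y l (L - l) (\<zeta>, pre_act (state W1 W2 lam y z0 u0 l) - \<zeta>)) $ s
      / sqrt (real CARD('m)))"
  by (simp add: fun_eq_iff out_of_z_def pre_act_def Let_def)

lemma lipschitz_out_of_z:
  fixes W1 :: "nat \<Rightarrow> real^'n::finite^'m::finite"
  assumes lam: "lam > 0" and C: "C \<ge> 0"
    and W2: "\<And>j. j \<in> {l<..L} \<Longrightarrow> spec_norm (W2 j) \<le> C * sqrt (real CARD('m))"
  shows "((1 + 2 * C) ^ (L - l))-lipschitz_on UNIV (out_of_z W1 W2 lam y z0 u0 L l s)"
proof -
  have entry: "1-lipschitz_on UNIV (\<lambda>v::real^'m. v $ s / sqrt (real CARD('m)))"
  proof (rule lipschitz_onI)
    fix v w :: "real^'m"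
    have "\<bar>v $ s - w $ s\<bar> / sqrt (real CARD('m)) \<le> \<bar>v $ s - w $ s\<bar>"
      by (simp add: divide_le_eq mult_le_cancel_left1)
    also have "\<dots> \<le> dist v w"
      using component_le_norm_cart[of "v - w" s] by (simp add: dist_norm)
    finally show
      "dist (v $ s / sqrt (real CARD('m))) (w $ s / sqrt (real CARD('m))) \<le> 1 * dist v w"
      by (simp add: dist_real_def flip: diff_divide_distrib)
  qed simp
  have "{l<..l + (L - l)} \<subseteq> {l<..L}"
    by auto
  then have "(1 * (1 + 2 * C) ^ (L - l))-lipschitz_on UNIV (\<lambda>\<zeta>.
      fst (layers W1 W2 lam y l (L - l) (\<zeta>, pre_act (state W1 W2 lam y z0 u0 l) - \<zeta>)) $ s
        / sqrt (real CARD('m)))"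
    using W2
    by (intro lipschitz_on_compose2 lipschitz_fst_layers[OF lam C] lipschitz_on_subset[OF entry]) auto
  then show ?thesis
    by (simp add: out_of_z_eq)
qed

lemma post_act_differentiable: "post_act lam differentiable (at w)"
  unfolding post_act_def[abs_def]
  by (intro differentiable_Pair differentiable_diff differentiable_ident sigma_vec_differentiable)

lemma layer_differentiable:
  fixes W1 :: "nat \<Rightarrow> real^'n::finite^'m::finite"
  shows "layer W1 W2 lam y j differentiable (at st)"
proof -
  have "bounded_linear (\<lambda>st::(real^'m) \<times> (real^'m). W2 j *v (fst st - snd st))"
    by (intro bounded_linear_compose[OF matrix_vector_mul_bounded_linear] bounded_linear_sub
        bounded_linear_fst bounded_linear_snd)
  then have "(\<lambda>st. pre_act (layer W1 W2 lam y j st)) differentiable (at st)"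
    unfolding pre_act_layer
    by (intro differentiable_add differentiable_const differentiable_scaleR
        bounded_linear_imp_differentiable bounded_linear_snd)
  then have "(\<lambda>st. post_act lam (pre_act (layer W1 W2 lam y j st))) differentiable (at st)"
    by (rule differentiable_compose[OF post_act_differentiable])
  then show ?thesis
    by (subst layer_eq_post_act[abs_def])
qed

lemma layers_differentiable:
  fixes W1 :: "nat \<Rightarrow> real^'n::finite^'m::finite"
  shows "(\<lambda>\<zeta>. layers W1 W2 lam y l k (\<zeta>, p - \<zeta>)) differentiable (at \<zeta>)"
proof (induction k arbitrary: \<zeta>)
  case 0
  show ?case by simp
next
  case (Suc k)
  show ?case
    unfolding layers.simps by (rule differentiable_compose[OF layer_differentiable Suc.IH])
qed

lemma out_of_z_differentiable:
  fixes W1 :: "nat \<Rightarrow> real^'n::finite^'m::finite"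
  shows "out_of_z W1 W2 lam y z0 u0 L l s differentiable (at \<zeta>)"
proof -
  have "bounded_linear (\<lambda>st::(real^'m) \<times> (real^'m). fst st $ s / sqrt (real CARD('m)))"
    by (intro bounded_linear_compose[OF bounded_linear_divide]
        bounded_linear_compose[OF bounded_linear_vec_nth] bounded_linear_fst)
  then show ?thesis
    unfolding out_of_z_eq
    by (rule differentiable_compose[OF bounded_linear_imp_differentiable layers_differentiable])
qed

lemma out_of_z_gradient_bound:
  fixes W1 :: "nat \<Rightarrow> real^'n::finite^'m::finite"
  assumes lam: "lam > 0" and Lsig: "\<And>x. \<bar>deriv (sigma lam) x\<bar> \<le> Lsig" and C: "C \<ge> 0"
    and W2: "\<And>j. j \<in> {l<..L} \<Longrightarrow> spec_norm (W2 j) \<le> C * sqrt (real CARD('m))"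
  shows "out_of_z W1 W2 lam y z0 u0 L l s differentiable (at \<zeta>)
    \<and> (\<forall>b. (out_of_z W1 W2 lam y z0 u0 L l s has_derivative (\<lambda>h. b \<bullet> h)) (at \<zeta>)
          \<longrightarrow> norm b \<le> Lsig ^ (L - l) * (2 * C + 1) ^ (L - l))"
proof (intro conjI allI impI)
  show "out_of_z W1 W2 lam y z0 u0 L l s differentiable (at \<zeta>)"
    by (rule out_of_z_differentiable)
  fix b
  assume "(out_of_z W1 W2 lam y z0 u0 L l s has_derivative (\<lambda>h. b \<bullet> h)) (at \<zeta>)"
  then have "norm b \<le> (1 + 2 * C) ^ (L - l)"
    using lipschitz_out_of_z[OF lam C W2] by (rule norm_gradient_le_lipschitz)
  also have "\<dots> \<le> (Lsig * (2 * C + 1)) ^ (L - l)"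
    using one_le_if_abs_deriv_sigma_le[OF Lsig] C
    by (intro power_mono) (simp_all add: mult_le_cancel_right1 add.commute)
  finally show "norm b \<le> Lsig ^ (L - l) * (2 * C + 1) ^ (L - l)"
    by (simp add: power_mult_distrib)
qed

theorem lemma10:
  fixes lam Lsig R1 R2 :: real and L l :: nat and s :: "'m::finite"
    and y :: "real^'n::finite" and z0 u0 :: "real^'m"
    and W1 W10 :: "nat \<Rightarrow> real^'n^'m" and W2 W20 :: "nat \<Rightarrow> real^'m^'m"
  assumes lam: "lam > 0"
    and Lsig: "\<And>x. \<bar>deriv (sigma lam) x\<bar> \<le> Lsig"
    and W20: "\<And>k. k \<in> {1..L} \<Longrightarrow> spec_norm (W20 k) \<le> c20 * sqrt (real CARD('m))"
    and R1: "frob_dist L W1 W10 \<le> R1"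
    and R2: "frob_dist L W2 W20 \<le> R2"
    and l: "l \<in> {1..L}"
  shows "out_of_z W1 W2 lam y z0 u0 L l s differentiable (at (fst (state W1 W2 lam y z0 u0 l)))
       \<and> (\<forall>b. (out_of_z W1 W2 lam y z0 u0 L l s has_derivative (\<lambda>h. b \<bullet> h))
                 (at (fst (state W1 W2 lam y z0 u0 l)))
             \<longrightarrow> norm b \<le> Lsig ^ (L - l) * (2 * (c20 + R2 / sqrt (real CARD('m))) + 1) ^ (L - l))
       \<and> out_of_z W10 W20 lam y z0 u0 L l s differentiable (at (fst (state W10 W20 lam y z0 u0 l)))
       \<and> (\<forall>b. (out_of_z W10 W20 lam y z0 u0 L l s has_derivative (\<lambda>h. b \<bullet> h))
                 (at (fst (state W10 W20 lam y z0 u0 l)))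
             \<longrightarrow> norm b \<le> Lsig ^ (L - l) * (2 * c20 + 1) ^ (L - l))"
proof -
  define C where "C = c20 + R2 / sqrt (real CARD('m))"
  have "0 \<le> R2"
    using R2 unfolding frob_dist_def
    by (meson order_trans real_sqrt_ge_zero sum_nonneg zero_le_power2)
  then have "0 \<le> C" and "0 \<le> c20"
    by (simp_all add: C_def c20_def)
  have W20': "spec_norm (W20 j) \<le> c20 * sqrt (real CARD('m))" if "j \<in> {l<..L}" for j
    using W20 l that by simp
  have W2': "spec_norm (W2 j) \<le> C * sqrt (real CARD('m))" if "j \<in> {l<..L}" for j
  proof -
    have "spec_norm (W2 j) \<le> spec_norm (W20 j) + spec_norm (W2 j - W20 j)"
      using spec_norm_add_le[of "W20 j" "W2 j - W20 j"] by simp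
    also have "\<dots> \<le> c20 * sqrt (real CARD('m)) + R2"
      using W20'[OF that] spec_norm_diff_le_frob_dist[of j L W2 W20] R2 l that by force
    finally show ?thesis
      by (simp add: C_def algebra_simps)
  qed
  show ?thesis
    using out_of_z_gradient_bound[where ?W2.0=W2 and l=l and L=L, OF lam Lsig \<open>0 \<le> C\<close> W2']
      out_of_z_gradient_bound[where ?W2.0=W20 and l=l and L=L, OF lam Lsig \<open>0 \<le> c20\<close> W20']
    unfolding C_def by blast
qed

end
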